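(* Let $\eta\in(0,1]$ be rational, $\eta=p/q$ with $p,q>0$ integers, and let $\omega(x)=\eta^{-1}$ for $x\in[0,\eta]$ and $\omega(x)=0$ for $x>\eta$. Let $f\in C^3(\mathbb{R}_+)$ satisfy $f'(\rho)\le0$ and $f(\rho)\ge0$ for all $\rho\ge0$, and suppose there is a constant $M\ge0$ with $\sup_{\rho\ge0}\big(\sum_{k=0}^3|f^{(k)}(\rho)|\big)+1\le M$. Then for every $\rho^*>0$, every $b\in\mathbb{R}$ with $|b|<\rho^*$ and every integer $k>0$, the function $$\rho(t,x)=\rho^*+b\sin\big(2kq\pi(x-f(\rho^* )t)\big),\quad t\ge0,\ x\in\mathbb{R},$$ is a solution of $$\frac{\partial\rho}{\partial t}(t,x)+\frac{\partial}{\partial x}\big(\rho(t,x)v(t,x)\big)=0,\quad v(t,x)=f\Big(\int_x^{x+\eta}\omega(s-x)\rho(t,s)\,ds\Big),\quad \rho(t,x+1)=\rho(t,x),\quad t\ge0,\ x\in\mathbb{R}.$$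
   Context: $\mathbb{R}_+=[0,+\infty)$. *)

theory Defs
  imports "HOL-Analysis.Analysis"
begin

definition omega :: "real \<Rightarrow> real \<Rightarrow> real" where
  "omega \<eta> x = (if 0 \<le> x \<and> x \<le> \<eta> then 1 / \<eta> else 0)"

definition velocity :: "real \<Rightarrow> (real \<Rightarrow> real) \<Rightarrow> (real \<Rightarrow> real \<Rightarrow> real) \<Rightarrow> real \<Rightarrow> real \<Rightarrow> real" where
  "velocity \<eta> f \<rho> t x = f (integral {x..x+\<eta>} (\<lambda>s. omega \<eta> (s - x) * \<rho> t s))"

definition is_solution :: "real \<Rightarrow> (real \<Rightarrow> real) \<Rightarrow> (real \<Rightarrow> real \<Rightarrow> real) \<Rightarrow> bool" where
  "is_solution \<eta> f \<rho> \<longleftrightarrow>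
     (\<forall>t\<ge>0. \<forall>x. \<exists>Dt Dx.
        ((\<lambda>\<tau>. \<rho> \<tau> x) has_real_derivative Dt) (at t within {0..}) \<and>
        ((\<lambda>y. \<rho> t y * velocity \<eta> f \<rho> t y) has_real_derivative Dx) (at x) \<and>
        Dt + Dx = 0 \<and>
        \<rho> t (x + 1) = \<rho> t x)"

end

theory Submission
  imports Defs
begin

text \<open>Since \<open>k q \<eta> = k p\<close> and \<open>k q\<close> are integers, the sinusoid \<open>\<rho>\<^sup>* + b sin(2 k q \<pi> y)\<close>
  is 1-periodic and the window \<open>[x, x + \<eta>]\<close> always covers a whole number of its periods.
  Its average over every window is therefore \<open>\<rho>\<^sup>*\<close>, so the nonlocal velocity is the constant
  \<open>f(\<rho>\<^sup>*)\<close>, and the equation reduces to linear transport, which is solved by the profile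
  travelling with speed \<open>f(\<rho>\<^sup>*)\<close>.\<close>

lemma sin_cos_add_2pi_int: "sin (x + 2 * pi * of_int n) = sin x \<and> cos (x + 2 * pi * of_int n) = cos x"
  using sin_cos_eq_iff by blast

lemma has_integral_sin_whole_periods:
  fixes c L s\<^sub>0 y :: real and n :: int
  assumes "0 \<le> L" and "c \<noteq> 0" and "c * L = 2 * pi * of_int n"
  shows "((\<lambda>s. sin (c * (s - s\<^sub>0))) has_integral 0) {y..y+L}"
proof -
  let ?F = "\<lambda>s. - cos (c * (s - s\<^sub>0)) / c"
  have "((\<lambda>s. sin (c * (s - s\<^sub>0))) has_integral ?F (y + L) - ?F y) {y..y+L}"
  proof (rule fundamental_theorem_of_calculus)
    show "(?F has_vector_derivative sin (c * (s - s\<^sub>0))) (at s within {y..y+L})" for s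
      unfolding has_real_derivative_iff_has_vector_derivative [symmetric]
      using assms(2) by (auto intro!: derivative_eq_intros)
  qed (use assms(1) in simp)
  moreover have "c * (y + L - s\<^sub>0) = c * (y - s\<^sub>0) + 2 * pi * of_int n"
    using assms(3) by (simp add: algebra_simps)
  ultimately show ?thesis
    using sin_cos_add_2pi_int by simp
qed

lemma velocity_eq_f_window_average:
  assumes "0 < \<eta>"
  shows "velocity \<eta> f \<rho> t x = f (integral {x..x+\<eta>} (\<rho> t) / \<eta>)"
proof -
  have "integral {x..x+\<eta>} (\<lambda>s. omega \<eta> (s - x) * \<rho> t s) = integral {x..x+\<eta>} (\<lambda>s. (1 / \<eta>) *\<^sub>R \<rho> t s)"
    by (rule integral_cong) (auto simp: omega_def)
  then show ?thesis
    unfolding velocity_def by simp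
qed

lemma is_solution_travelling_wave:
  fixes u u' :: "real \<Rightarrow> real"
  assumes u': "\<And>y. (u has_real_derivative u' y) (at y)"
    and periodic: "\<And>y. u (y + 1) = u y"
    and velocity: "\<And>t x. t \<ge> 0 \<Longrightarrow> velocity \<eta> f (\<lambda>t x. u (x - d * t)) t x = d"
  shows "is_solution \<eta> f (\<lambda>t x. u (x - d * t))"
  unfolding is_solution_def
proof (intro allI impI exI conjI)
  fix t x :: real
  assume "t \<ge> 0"
  have "((\<lambda>\<tau>. x - d * \<tau>) has_real_derivative - d) (at t within {0..})"
    by (auto intro!: derivative_eq_intros)
  then show "((\<lambda>\<tau>. u (x - d * \<tau>)) has_real_derivative u' (x - d * t) * - d) (at t within {0..})"
    by (rule DERIV_chain2 [OF u'])
  have "(\<lambda>y. u (y - d * t) * velocity \<eta> f (\<lambda>t x. u (x - d * t)) t y) = (\<lambda>y. u (y - d * t) * d)"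
    using velocity [OF \<open>t \<ge> 0\<close>] by simp
  then show "((\<lambda>y. u (y - d * t) * velocity \<eta> f (\<lambda>t x. u (x - d * t)) t y)
      has_real_derivative u' (x - d * t) * d) (at x)"
    by (auto intro!: DERIV_chain2 [OF u'] derivative_eq_intros)
  show "u' (x - d * t) * - d + u' (x - d * t) * d = 0"
    by simp
  show "u (x + 1 - d * t) = u (x - d * t)"
    using periodic [of "x - d * t"] by (simp add: algebra_simps)
qed

theorem proposition3p1:
  fixes p q :: int and \<eta> M :: real and f f1 f2 f3 :: "real \<Rightarrow> real"
  assumes "p > 0" and "q > 0" and "\<eta> = real_of_int p / real_of_int q"
    and "0 < \<eta>" and "\<eta> \<le> 1"
    and "\<And>r. r \<ge> 0 \<Longrightarrow> (f has_real_derivative f1 r) (at r within {0..})"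
    and "\<And>r. r \<ge> 0 \<Longrightarrow> (f1 has_real_derivative f2 r) (at r within {0..})"
    and "\<And>r. r \<ge> 0 \<Longrightarrow> (f2 has_real_derivative f3 r) (at r within {0..})"
    and "continuous_on {0..} f3"
    and "\<And>r. r \<ge> 0 \<Longrightarrow> f1 r \<le> 0"
    and "\<And>r. r \<ge> 0 \<Longrightarrow> f r \<ge> 0"
    and "M \<ge> 0"
    and "\<And>r. r \<ge> 0 \<Longrightarrow> \<bar>f r\<bar> + \<bar>f1 r\<bar> + \<bar>f2 r\<bar> + \<bar>f3 r\<bar> + 1 \<le> M"
  shows "\<forall>\<rho>s b k. \<rho>s > 0 \<longrightarrow> \<bar>b\<bar> < \<rho>s \<longrightarrow> k > (0::int) \<longrightarrow>
           is_solution \<eta> f (\<lambda>t x. \<rho>s + b * sin (2 * real_of_int k * real_of_int q * pi * (x - f \<rho>s * t)))"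
proof (intro allI impI)
  fix \<rho>s b :: real and k :: int
  assume "k > 0"
  define c where "c = 2 * real_of_int k * real_of_int q * pi"
  define u where "u y = \<rho>s + b * sin (c * y)" for y
  have "c \<noteq> 0"
    using \<open>k > 0\<close> \<open>q > 0\<close> by (simp add: c_def)
  have window_periods: "c * \<eta> = 2 * pi * of_int (k * p)"
    and unit_periods: "c = 2 * pi * of_int (k * q)"
    using \<open>q > 0\<close> by (simp_all add: c_def assms(3))
  have "((\<lambda>s. u (s - f \<rho>s * t)) has_integral \<eta> * \<rho>s) {x..x+\<eta>}" for t x
    using has_integral_add [OF has_integral_const_real has_integral_mult_right
        [OF has_integral_sin_whole_periods [OF _ \<open>c \<noteq> 0\<close> window_periods]]] \<open>0 < \<eta>\<close>
    by (simp add: u_def)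
  then have "integral {x..x+\<eta>} (\<lambda>s. u (s - f \<rho>s * t)) = \<eta> * \<rho>s" for t x
    by (rule integral_unique)
  then have "velocity \<eta> f (\<lambda>t x. u (x - f \<rho>s * t)) t x = f \<rho>s" for t x
    using \<open>0 < \<eta>\<close> by (simp add: velocity_eq_f_window_average)
  moreover have "u (y + 1) = u y" for y
    using sin_cos_add_2pi_int [of "c * y" "k * q"] unit_periods by (simp add: u_def distrib_left)
  moreover have "(u has_real_derivative b * (cos (c * y) * c)) (at y)" for y
    unfolding u_def by (auto intro!: derivative_eq_intros)
  ultimately have "is_solution \<eta> f (\<lambda>t x. u (x - f \<rho>s * t))"
    by (intro is_solution_travelling_wave)
  then show "is_solution \<eta> f (\<lambda>t x. \<rho>s + b * sin (2 * real_of_int k * real_of_int q * pi * (x - f \<rho>s * t)))"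
    by (simp add: u_def c_def)
qed

end
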